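(* If $G_1$ and $G_2$ are vertex-disjoint triangle graphs, then their disjoint union $G_1+G_2$ and their join $G_1*G_2$ are also triangle graphs.
   Context: A graph $G$ is triangle if for every maximal stable set $S$ of $G$ and every edge $uv$ of $G$ with $u,v\notin S$, there is $s\in S$ adjacent to both $u$ and $v$. The join $G_1*G_2$ is obtained from $G_1+G_2$ by adding all edges between $V(G_1)$ and $V(G_2)$. *)

theory Defs
  imports Main
begin

definition graph :: "'a set \<Rightarrow> 'a set set \<Rightarrow> bool" where
  "graph V E \<longleftrightarrow> finite V \<and> (\<forall>e\<in>E. e \<subseteq> V \<and> card e = 2)"

definition stable_set :: "'a set \<Rightarrow> 'a set set \<Rightarrow> 'a set \<Rightarrow> bool" where
  "stable_set V E S \<longleftrightarrow> S \<subseteq> V \<and> (\<forall>u\<in>S. \<forall>v\<in>S. {u, v} \<notin> E)"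

definition maximal_stable_set :: "'a set \<Rightarrow> 'a set set \<Rightarrow> 'a set \<Rightarrow> bool" where
  "maximal_stable_set V E S \<longleftrightarrow>
     stable_set V E S \<and> (\<forall>T. stable_set V E T \<and> S \<subseteq> T \<longrightarrow> T = S)"

definition triangle_graph :: "'a set \<Rightarrow> 'a set set \<Rightarrow> bool" where
  "triangle_graph V E \<longleftrightarrow>
     (\<forall>S. maximal_stable_set V E S \<longrightarrow>
        (\<forall>u v. {u, v} \<in> E \<and> u \<notin> S \<and> v \<notin> S \<longrightarrow>
           (\<exists>s\<in>S. {s, u} \<in> E \<and> {s, v} \<in> E)))"

text \<open>Disjoint union G1 + G2 and join G1 * G2 (edge sets; vertex set is V1 \<union> V2).\<close>

definition union_edges :: "'a set set \<Rightarrow> 'a set set \<Rightarrow> 'a set set" where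
  "union_edges E1 E2 = E1 \<union> E2"

definition join_edges :: "'a set \<Rightarrow> 'a set set \<Rightarrow> 'a set \<Rightarrow> 'a set set \<Rightarrow> 'a set set" where
  "join_edges V1 E1 V2 E2 = E1 \<union> E2 \<union> {{a, b} | a b. a \<in> V1 \<and> b \<in> V2}"

end

theory Submission
  imports Defs
begin

text \<open>In a graph, a stable set is maximal iff it dominates every vertex outside it. For the
  disjoint union, a maximal stable set S meets each side in a maximal stable set, since a vertex
  of one side is only dominated from that side. For the join, the cross edges force S into one
  side, say V1, where it is again maximal: an edge inside V1 is handled by the triangle property
  of G1, an edge inside V2 by any vertex of S, and a cross edge uv with u in V1 by a neighbour of
  u in S, which is joined to v.\<close>

lemma graph_edge_endpoints:
  assumes "graph V E" and "{u, v} \<in> E"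
  shows "u \<in> V \<and> v \<in> V \<and> u \<noteq> v"
proof -
  have "{u, v} \<subseteq> V" and "card {u, v} = 2" using assms unfolding graph_def by auto
  then show ?thesis by (cases "u = v") auto
qed

lemma maximal_stable_set_iff_dominating:
  assumes "graph V E"
  shows "maximal_stable_set V E S \<longleftrightarrow>
           stable_set V E S \<and> (\<forall>x\<in>V - S. \<exists>s\<in>S. {s, x} \<in> E)"
proof
  assume max: "maximal_stable_set V E S"
  then have st: "stable_set V E S" unfolding maximal_stable_set_def by blast
  have "\<exists>s\<in>S. {s, x} \<in> E" if x: "x \<in> V - S" for x
  proof (rule ccontr)
    assume "\<not> ?thesis"
    then have "stable_set V E (insert x S)"
      using st x graph_edge_endpoints[OF assms, of x x]
      unfolding stable_set_def by (auto simp: insert_commute)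
    then show False using max x unfolding maximal_stable_set_def by blast
  qed
  with st show "stable_set V E S \<and> (\<forall>x\<in>V - S. \<exists>s\<in>S. {s, x} \<in> E)" by blast
next
  assume "stable_set V E S \<and> (\<forall>x\<in>V - S. \<exists>s\<in>S. {s, x} \<in> E)"
  then show "maximal_stable_set V E S"
    unfolding maximal_stable_set_def stable_set_def by blast
qed

lemma maximal_stable_set_restrict:
  assumes "graph V E" and "graph W F" and "W \<subseteq> V" and "F \<subseteq> E"
    and "maximal_stable_set V E S"
    and "\<And>x s. x \<in> W \<Longrightarrow> s \<in> S \<Longrightarrow> {s, x} \<in> E \<Longrightarrow> s \<in> W \<and> {s, x} \<in> F"
  shows "maximal_stable_set W F (S \<inter> W)"
proof -
  have "stable_set V E S" and dom: "\<forall>x\<in>V - S. \<exists>s\<in>S. {s, x} \<in> E"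
    using assms(5) maximal_stable_set_iff_dominating[OF assms(1)] by auto
  then have "stable_set W F (S \<inter> W)" using \<open>F \<subseteq> E\<close> unfolding stable_set_def by blast
  moreover have "\<forall>x\<in>W - S \<inter> W. \<exists>s\<in>S \<inter> W. {s, x} \<in> F"
    using dom \<open>W \<subseteq> V\<close> assms(6) by blast
  ultimately show ?thesis using maximal_stable_set_iff_dominating[OF assms(2)] by blast
qed

lemma graph_union_edges:
  assumes "graph V1 E1" and "graph V2 E2"
  shows "graph (V1 \<union> V2) (union_edges E1 E2)"
  using assms unfolding graph_def union_edges_def by auto

lemma maximal_stable_set_union_edges_left:
  assumes g1: "graph V1 E1" and g2: "graph V2 E2" and "V1 \<inter> V2 = {}"
    and "maximal_stable_set (V1 \<union> V2) (union_edges E1 E2) S"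
  shows "maximal_stable_set V1 E1 (S \<inter> V1)"
proof (rule maximal_stable_set_restrict[OF graph_union_edges[OF g1 g2] g1 _ _ assms(4)])
  fix x s assume "x \<in> V1" and "{s, x} \<in> union_edges E1 E2"
  then show "s \<in> V1 \<and> {s, x} \<in> E1"
    using \<open>V1 \<inter> V2 = {}\<close> graph_edge_endpoints[OF g1, of s x] graph_edge_endpoints[OF g2, of s x]
    unfolding union_edges_def by blast
qed (auto simp: union_edges_def)

lemma triangle_graph_union_edges:
  assumes g1: "graph V1 E1" and g2: "graph V2 E2" and d: "V1 \<inter> V2 = {}"
    and t1: "triangle_graph V1 E1" and t2: "triangle_graph V2 E2"
  shows "triangle_graph (V1 \<union> V2) (union_edges E1 E2)"
  unfolding triangle_graph_def
proof (intro allI impI)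
  fix S u v
  assume max: "maximal_stable_set (V1 \<union> V2) (union_edges E1 E2) S"
    and uv: "{u, v} \<in> union_edges E1 E2 \<and> u \<notin> S \<and> v \<notin> S"
  have m1: "maximal_stable_set V1 E1 (S \<inter> V1)"
    using maximal_stable_set_union_edges_left[OF g1 g2 d max] .
  have m2: "maximal_stable_set V2 E2 (S \<inter> V2)"
    using maximal_stable_set_union_edges_left[OF g2 g1, of S] max d
    by (simp add: union_edges_def Un_commute Int_commute)
  from uv have "{u, v} \<in> E1 \<or> {u, v} \<in> E2" unfolding union_edges_def by blast
  then show "\<exists>s\<in>S. {s, u} \<in> union_edges E1 E2 \<and> {s, v} \<in> union_edges E1 E2"
    using t1 t2 m1 m2 uv unfolding triangle_graph_def union_edges_def by blast
qed

lemma graph_join_edges: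
  assumes "graph V1 E1" and "graph V2 E2" and "V1 \<inter> V2 = {}"
  shows "graph (V1 \<union> V2) (join_edges V1 E1 V2 E2)"
  using assms unfolding graph_def join_edges_def by (auto simp: card_insert_if)

lemma join_edges_commute: "join_edges V1 E1 V2 E2 = join_edges V2 E2 V1 E1"
  unfolding join_edges_def by (auto simp: insert_commute)

lemma join_edges_cross: "a \<in> V1 \<Longrightarrow> b \<in> V2 \<Longrightarrow> {a, b} \<in> join_edges V1 E1 V2 E2"
  unfolding join_edges_def by blast

lemma join_edges_within_left:
  assumes "graph V2 E2" and "V1 \<inter> V2 = {}"
    and "x \<in> V1" and "y \<in> V1" and "{x, y} \<in> join_edges V1 E1 V2 E2"
  shows "{x, y} \<in> E1"
  using assms graph_edge_endpoints[OF assms(1), of x y]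
  unfolding join_edges_def by (auto simp: doubleton_eq_iff)

lemma stable_set_join_edges_side:
  assumes "stable_set (V1 \<union> V2) (join_edges V1 E1 V2 E2) S"
  shows "S \<subseteq> V1 \<or> S \<subseteq> V2"
proof (rule ccontr)
  assume "\<not> ?thesis"
  then obtain a b where "a \<in> S" "b \<in> S" "a \<in> V1" "b \<in> V2"
    using assms unfolding stable_set_def by blast
  then show False using assms join_edges_cross[of a V1 b V2 E1 E2]
    unfolding stable_set_def by blast
qed

lemma triangle_join_edges_left:
  assumes g1: "graph V1 E1" and g2: "graph V2 E2" and d: "V1 \<inter> V2 = {}"
    and t1: "triangle_graph V1 E1"
    and max: "maximal_stable_set (V1 \<union> V2) (join_edges V1 E1 V2 E2) S" and "S \<subseteq> V1"
    and uv: "{u, v} \<in> join_edges V1 E1 V2 E2" and "u \<notin> S" and "v \<notin> S"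
  shows "\<exists>s\<in>S. {s, u} \<in> join_edges V1 E1 V2 E2 \<and> {s, v} \<in> join_edges V1 E1 V2 E2"
proof -
  let ?J = "join_edges V1 E1 V2 E2"
  have gJ: "graph (V1 \<union> V2) ?J" using graph_join_edges[OF g1 g2 d] .
  have "E1 \<subseteq> ?J" unfolding join_edges_def by blast
  have m1: "maximal_stable_set V1 E1 S"
    using maximal_stable_set_restrict[OF gJ g1 _ \<open>E1 \<subseteq> ?J\<close> max]
      join_edges_within_left[OF g2 d] \<open>S \<subseteq> V1\<close> by (simp add: Int_absorb2 subset_iff)
  have dom1: "\<exists>s\<in>S. {s, w} \<in> ?J" if "w \<in> V1" "w \<notin> S" for w
    using m1 that \<open>E1 \<subseteq> ?J\<close> maximal_stable_set_iff_dominating[OF g1] by blast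
  have cross: "{s, w} \<in> ?J" if "s \<in> S" "w \<in> V2" for s w
    using join_edges_cross[of s V1 w V2 E1 E2] \<open>S \<subseteq> V1\<close> that by blast
  have u: "u \<in> V1 \<union> V2" and v: "v \<in> V1 \<union> V2"
    using graph_edge_endpoints[OF gJ uv] by auto
  show ?thesis
  proof (cases "u \<in> V1 \<and> v \<in> V1")
    case True
    then have "{u, v} \<in> E1" using join_edges_within_left[OF g2 d _ _ uv] by blast
    then show ?thesis
      using t1 m1 \<open>u \<notin> S\<close> \<open>v \<notin> S\<close> \<open>E1 \<subseteq> ?J\<close> unfolding triangle_graph_def by blast
  next
    case False
    obtain s0 where "s0 \<in> S"
      using max u \<open>u \<notin> S\<close> maximal_stable_set_iff_dominating[OF gJ] by blast
    txt \<open>An endpoint x in V2 is adjacent to all of S, so only the other endpoint y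
      constrains the choice of s.\<close>
    have "\<exists>s\<in>S. {s, u} \<in> ?J \<and> {s, v} \<in> ?J" if "x \<in> V2" "y \<in> V1 \<union> V2" "y \<notin> S"
      and "{x, y} = {u, v}" for x y
    proof (cases "y \<in> V1")
      case True
      then obtain s where "s \<in> S" "{s, y} \<in> ?J" using dom1 \<open>y \<notin> S\<close> by blast
      then show ?thesis using cross[of s x] \<open>x \<in> V2\<close> \<open>{x, y} = {u, v}\<close>
        by (auto simp: doubleton_eq_iff)
    next
      case False
      then show ?thesis using \<open>s0 \<in> S\<close> cross[of s0 x] cross[of s0 y] that
        by (auto simp: doubleton_eq_iff)
    qed
    moreover have "u \<in> V2 \<or> v \<in> V2" using False u v by blast
    ultimately show ?thesis
      using u v \<open>u \<notin> S\<close> \<open>v \<notin> S\<close> insert_commute[of u v "{}"] by blast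
  qed
qed

lemma triangle_graph_join_edges:
  assumes g1: "graph V1 E1" and g2: "graph V2 E2" and d: "V1 \<inter> V2 = {}"
    and t1: "triangle_graph V1 E1" and t2: "triangle_graph V2 E2"
  shows "triangle_graph (V1 \<union> V2) (join_edges V1 E1 V2 E2)"
  unfolding triangle_graph_def
proof (intro allI impI)
  fix S u v
  assume max: "maximal_stable_set (V1 \<union> V2) (join_edges V1 E1 V2 E2) S"
    and uv: "{u, v} \<in> join_edges V1 E1 V2 E2 \<and> u \<notin> S \<and> v \<notin> S"
  have max': "maximal_stable_set (V2 \<union> V1) (join_edges V2 E2 V1 E1) S"
    using max by (simp add: join_edges_commute Un_commute)
  from max have "stable_set (V1 \<union> V2) (join_edges V1 E1 V2 E2) S"
    unfolding maximal_stable_set_def by blast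
  then consider "S \<subseteq> V1" | "S \<subseteq> V2" using stable_set_join_edges_side by blast
  then show "\<exists>s\<in>S. {s, u} \<in> join_edges V1 E1 V2 E2 \<and> {s, v} \<in> join_edges V1 E1 V2 E2"
  proof cases
    case 1
    then show ?thesis using triangle_join_edges_left[OF g1 g2 d t1 max] uv by blast
  next
    case 2
    moreover have "V2 \<inter> V1 = {}" using d by blast
    ultimately show ?thesis
      using triangle_join_edges_left[OF g2 g1 _ t2 max', of u v] uv
      unfolding join_edges_commute[of V2] by blast
  qed
qed

theorem proposition5:
  assumes "graph V1 E1" and "graph V2 E2"
    and "V1 \<inter> V2 = {}"
    and "triangle_graph V1 E1" and "triangle_graph V2 E2"
  shows "graph (V1 \<union> V2) (union_edges E1 E2)
         \<and> triangle_graph (V1 \<union> V2) (union_edges E1 E2)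
         \<and> graph (V1 \<union> V2) (join_edges V1 E1 V2 E2)
         \<and> triangle_graph (V1 \<union> V2) (join_edges V1 E1 V2 E2)"
  using graph_union_edges[OF assms(1,2)] triangle_graph_union_edges[OF assms]
    graph_join_edges[OF assms(1-3)] triangle_graph_join_edges[OF assms]
  by blast

end
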